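(* Let $n \ge 1$. Define $F_0(k) = k$ for all $k \ge 1$, and for $1 \le q \le n$ define $F_q$ on $\{1, \ldots, 2^n\}$ inductively by $F_q(1) = 0$ and, for $k \ge 2$, $$F_q(k) = \max_{1 \le k' \le k/2} \bigl( F_q(k') + F_q(k-k') + F_{q-1}(k') \bigr).$$ Then for all $1 \le q \le n$ and $1 \le k \le 2^n$, $$F_q(k) = \sum_{i=0}^{k-1} h_q(i).$$
   Context: For $i \in [0:2^n-1]$, $h(i)$ denotes the number of ones in the binary representation of $i$, and $h_q(i) = \binom{h(i)}{q}$ (so $h_0(i) = 1$ and $\sum_{i=0}^{k-1} h_0(i) = k$). The maximum is over integers $k'$. *)

theory Defs
  imports Main
begin

fun h :: "nat \<Rightarrow> nat" where
  "h i = (if i = 0 then 0 else i mod 2 + h (i div 2))"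

definition hq :: "nat \<Rightarrow> nat \<Rightarrow> nat" where
  "hq q i = h i choose q"

text \<open>F q k; F 0 k = k, and for q \<ge> 1: F q 1 = 0 and for k \<ge> 2 the max recursion.
  (The value at k = 0 for q \<ge> 1 is an irrelevant convention.)\<close>
function F :: "nat \<Rightarrow> nat \<Rightarrow> nat" where
  "F 0 k = k"
| "F (Suc q) k = (if k \<le> 1 then 0 else
      Max ((\<lambda>k'. F (Suc q) k' + F (Suc q) (k - k') + F q k') ` {1..k div 2}))"
  by pat_completeness auto
termination
  by (relation "measures [fst, snd]") auto

end

theory Submission
  imports Defs
begin

text \<open>Let \<open>S q k = (\<Sum>i<k. hq q i)\<close>. Because \<open>h (2i) = h i\<close> and \<open>h (2i+1) = h i + 1\<close>,
  Pascal's rule gives \<open>S q (2m) = 2 S q m + S (q-1) m\<close> and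
  \<open>S q (2m+1) = S q m + S q (m+1) + S (q-1) m\<close>: the balanced split \<open>k' = k div 2\<close> attains
  \<open>S q k\<close> in the recursion for \<open>F q k\<close>. No other split does better, i.e.
  \<open>S q a + S q b + S (q-1) a \<le> S q (a + b)\<close> for \<open>a \<le> b\<close>; this follows by induction on \<open>q\<close>
  and, inside, on \<open>a + b\<close>, since halving \<open>a\<close> and \<open>b\<close> reduces it to instances with smaller
  arguments for \<open>q\<close> and for \<open>q - 1\<close>.\<close>

lemma h_0 [simp]: "h 0 = 0"
  by simp

lemma h_double [simp]: "h (2 * m) = h m"
  by (subst h.simps) auto

lemma h_Suc_double [simp]: "h (Suc (2 * m)) = Suc (h m)"
  by (subst h.simps) auto

declare h.simps [simp del]

definition hq_sum :: "nat \<Rightarrow> nat \<Rightarrow> nat" where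
  "hq_sum q k = (\<Sum>i<k. hq q i)"

lemma hq_sum_0_right [simp]: "hq_sum q 0 = 0"
  by (simp add: hq_sum_def)

lemma hq_sum_Suc: "hq_sum q (Suc k) = hq_sum q k + (h k choose q)"
  by (simp add: hq_sum_def hq_def)

lemma hq_sum_0_left [simp]: "hq_sum 0 k = k"
  by (simp add: hq_sum_def hq_def)

lemma mono_hq_sum: "mono (hq_sum q)"
  unfolding hq_sum_def by (intro monoI sum_mono2) auto

lemma hq_sum_double: "hq_sum (Suc q) (2 * m) = 2 * hq_sum (Suc q) m + hq_sum q m"
  by (induction m) (simp_all add: hq_sum_Suc)

lemma hq_sum_Suc_double:
  "hq_sum (Suc q) (Suc (2 * m)) = hq_sum (Suc q) m + hq_sum (Suc q) (Suc m) + hq_sum q m"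
  by (simp add: hq_sum_double hq_sum_Suc)

text \<open>Applied with \<open>A = S q\<close>, \<open>B = S (q-1)\<close>, \<open>C = S (q-2)\<close>, where \<open>C = 0\<close> if \<open>q = 1\<close>.\<close>

lemma split_le_step:
  fixes A B C :: "nat \<Rightarrow> nat"
  assumes A_double: "\<And>m. A (2 * m) = 2 * A m + B m"
    and A_Suc_double: "\<And>m. A (Suc (2 * m)) = A m + A (Suc m) + B m"
    and B_double: "\<And>m. B (2 * m) = 2 * B m + C m"
    and B_Suc_double: "\<And>m. B (Suc (2 * m)) = B m + B (Suc m) + C m"
    and "mono B"
    and B_split_le: "\<And>a b. a \<le> b \<Longrightarrow> B a + B b + C a \<le> B (a + b)"
    and "a \<le> b"
  shows "A a + A b + B a \<le> A (a + b)"
  using \<open>a \<le> b\<close>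
proof (induction "a + b" arbitrary: a b rule: less_induct)
  case less
  have A_0: "A 0 = 0" and B_0: "B 0 = 0"
    using A_double[of 0] B_double[of 0] by simp_all
  obtain x r where a: "a = 2 * x + r" and "r < 2"
    using div_mult_mod_eq[of a 2] by (metis mod_less_divisor mult.commute zero_less_numeral)
  obtain y s where b: "b = 2 * y + s" and "s < 2"
    using div_mult_mod_eq[of b 2] by (metis mod_less_divisor mult.commute zero_less_numeral)
  have IH: "A u + A v + B u \<le> A (u + v)" if "u \<le> v" "u + v < a + b" for u v
    using less.hyps that by blast
  consider "r = 0" "s = 0" | "r = 0" "s = 1" | "r = 1" "s = 0" | "r = 1" "s = 1"
    using \<open>r < 2\<close> \<open>s < 2\<close> by linarith
  then show ?case
  proof cases
    case 1
    show ?thesis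
    proof (cases "x = 0")
      case True
      then show ?thesis using a 1 A_0 B_0 by simp
    next
      case False
      have "a + b = 2 * (x + y)" using a b 1 by simp
      moreover have "A x + A y + B x \<le> A (x + y)"
        using IH[of x y] less.prems a b 1 False by simp
      moreover have "B x + B y + C x \<le> B (x + y)"
        using B_split_le less.prems a b 1 by simp
      ultimately show ?thesis
        using a b 1 A_double[of x] A_double[of y] A_double[of "x + y"] B_double[of x] by simp
    qed
  next
    case 2
    show ?thesis
    proof (cases "x = 0")
      case True
      then show ?thesis using a 2 A_0 B_0 by simp
    next
      case False
      have "a + b = Suc (2 * (x + y))" using a b 2 by simp
      moreover have "A x + A y + B x \<le> A (x + y)"
        using IH[of x y] less.prems a b 2 False by simp
      moreover have "A x + A (Suc y) + B x \<le> A (x + Suc y)"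
        using IH[of x "Suc y"] less.prems a b 2 False by simp
      moreover have "B x + B y + C x \<le> B (x + y)"
        using B_split_le less.prems a b 2 by simp
      ultimately show ?thesis
        using a b 2 A_double[of x] A_Suc_double[of y] A_Suc_double[of "x + y"] B_double[of x]
        by simp
    qed
  next
    case 3
    have "x < y" using less.prems a b 3 by simp
    have "a + b = Suc (2 * (x + y))" using a b 3 by simp
    moreover have "A x + A y + B x \<le> A (x + y)"
      using IH[of x y] \<open>x < y\<close> a b 3 by simp
    moreover have "A (Suc x) + A y + B (Suc x) \<le> A (Suc x + y)"
      using IH[of "Suc x" y] \<open>x < y\<close> a b 3 by simp
    moreover have "B x + B y + C x \<le> B (x + y)"
      using B_split_le \<open>x < y\<close> by simp
    ultimately show ?thesis
      using a b 3 A_Suc_double[of x] A_double[of y] A_Suc_double[of "x + y"] B_Suc_double[of x]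
      by simp
  next
    case 4
    have "x \<le> y" using less.prems a b 4 by simp
    have sum: "a + b = 2 * Suc (x + y)" using a b 4 by simp
    have IH_x: "A x + A (Suc y) + B x \<le> A (x + Suc y)"
      using IH[of x "Suc y"] \<open>x \<le> y\<close> a b 4 by simp
    show ?thesis
    proof (cases "x = y")
      case True
      then show ?thesis
        using sum IH_x a b 4 A_Suc_double[of x] B_Suc_double[of x] A_double[of "Suc (x + y)"]
        by (simp add: mult_2)
    next
      case False
      have "A (Suc x) + A y + B (Suc x) \<le> A (Suc x + y)"
        using IH[of "Suc x" y] \<open>x \<le> y\<close> False a b 4 by simp
      moreover have "B x + B (Suc y) + C x \<le> B (x + Suc y)"
        using B_split_le[of x "Suc y"] \<open>x \<le> y\<close> by simp
      moreover have "B y \<le> B (Suc y)"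
        using \<open>mono B\<close> by (simp add: monoD)
      ultimately show ?thesis
        using sum IH_x a b 4 A_Suc_double[of x] A_Suc_double[of y] B_Suc_double[of x]
          A_double[of "Suc (x + y)"]
        by simp
    qed
  qed
qed

lemma hq_sum_split_le:
  "a \<le> b \<Longrightarrow> hq_sum (Suc q) a + hq_sum (Suc q) b + hq_sum q a \<le> hq_sum (Suc q) (a + b)"
proof (induction q arbitrary: a b)
  case 0
  show ?case
    by (rule split_le_step[where C = "\<lambda>_. 0"])
      (use 0 hq_sum_double hq_sum_Suc_double in \<open>simp_all add: mono_def\<close>)
next
  case (Suc q)
  show ?case
    by (rule split_le_step[where C = "hq_sum q"])
      (use Suc hq_sum_double hq_sum_Suc_double mono_hq_sum in simp_all)
qed

lemma hq_sum_split_half: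
  "hq_sum (Suc q) k = hq_sum (Suc q) (k div 2) + hq_sum (Suc q) (k - k div 2) + hq_sum q (k div 2)"
proof (cases "even k")
  case True
  then obtain m where "k = 2 * m" by blast
  then show ?thesis by (simp add: hq_sum_double)
next
  case False
  then obtain m where "k = Suc (2 * m)" using oddE by fastforce
  then show ?thesis by (simp add: hq_sum_Suc_double)
qed

lemma F_Suc_1 [simp]: "F (Suc q) (Suc 0) = 0"
  by simp

declare F.simps(2) [simp del]

lemma F_eq_hq_sum: "1 \<le> k \<Longrightarrow> F q k = hq_sum q k"
proof (induction q arbitrary: k)
  case 0
  then show ?case by simp
next
  case (Suc q)
  show ?case
    using Suc.prems
  proof (induction k rule: less_induct)
    case (less k)
    show ?case
    proof (cases "k \<le> 1")
      case True
      then have "k = Suc 0" using less.prems by simp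
      then show ?thesis by (simp add: hq_sum_Suc)
    next
      case False
      let ?split = "\<lambda>k'. hq_sum (Suc q) k' + hq_sum (Suc q) (k - k') + hq_sum q k'"
      have "F (Suc q) k = Max ((\<lambda>k'. F (Suc q) k' + F (Suc q) (k - k') + F q k') ` {1..k div 2})"
        by (subst F.simps) (simp only: if_not_P[OF False])
      also have "\<dots> = Max (?split ` {1..k div 2})"
      proof (intro arg_cong[where f = Max] image_cong refl)
        fix k' assume "k' \<in> {1..k div 2}"
        then have "1 \<le> k'" "k' < k" "1 \<le> k - k'" "k - k' < k"
          using False by auto
        then show "F (Suc q) k' + F (Suc q) (k - k') + F q k' = ?split k'"
          using less.IH Suc.IH by simp
      qed
      also have "\<dots> = hq_sum (Suc q) k"
      proof (rule Max_eqI)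
        show "y \<le> hq_sum (Suc q) k" if y_mem: "y \<in> ?split ` {1..k div 2}" for y
        proof -
          obtain k' where "k' \<in> {1..k div 2}" and y: "y = ?split k'"
            using y_mem by blast
          then have "k' \<le> k - k'" "k' + (k - k') = k"
            by auto
          then show ?thesis
            unfolding y
            using hq_sum_split_le[of k' "k - k'" q] by simp
        qed
        show "hq_sum (Suc q) k \<in> ?split ` {1..k div 2}"
          using False hq_sum_split_half[of q k] by auto
      qed simp
      finally show ?thesis .
    qed
  qed
qed

theorem lemma3:
  fixes n q k :: nat
  assumes "n \<ge> 1" and "1 \<le> q" and "q \<le> n" and "1 \<le> k" and "k \<le> 2 ^ n"
  shows "F q k = (\<Sum>i<k. hq q i)"
  using F_eq_hq_sum[OF \<open>1 \<le> k\<close>] by (simp add: hq_sum_def)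

end
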